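(* Let $1<K<n$, let $\|\cdot\|_s$ be a sign- and permutation-invariant norm on $\mathbb{R}^n$, and let $\|\cdot\|_c$ be the gauge of $\mathrm{conv}(N^K_{\|\cdot\|_s})$. Then for every $x\in\mathbb{R}^n$, $\|x\|_c=\|u(x)\|_s$.
   Context: A norm is sign- and permutation-invariant if $\|Px\|_s=\|x\|_s$ for every permutation matrix $P$ and $\|\bar x\|_s=\|x\|_s$ whenever $|\bar x|=|x|$ componentwise. $N^K_{\|\cdot\|_s}=\{x\in\mathbb{R}^n\mid\|x\|_s\le 1,\ \mathrm{card}(x)\le K\}$, where $\mathrm{card}(x)$ is the number of nonzero entries. $\mathrm{conv}(N^K_{\|\cdot\|_s})$ is a compact convex set, symmetric about 0, containing 0 in its interior, and its gauge $\|x\|_c=\min\{t>0\mid x/t\in\mathrm{conv}(N^K_{\|\cdot\|_s})\}$ is a norm. For $x\in\mathbb{R}^n$, with $|x|_{[i]}$ the $i$-th largest absolute value of entries of $x$: $s(x)_i=\frac{\sum_{j=i}^n|x|_{[j]}}{K-i+1}$ ($i=1,\dots,K$); $i_x$ is the smallest index in $\{1,\dots,K\}$ minimizing $s(x)_i$; $\delta(x)=s(x)_{i_x}$; $u(x)_i=|x|_{[i]}$ for $i<i_x$, $u(x)_i=\delta(x)$ for $i_x\le i\le K$, $u(x)_i=0$ for $i>K$. *)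

theory Defs
  imports "HOL-Analysis.Analysis" "HOL-Library.Multiset"
begin

text \<open>Vectors in R^n are modelled as real^'n for a finite index type 'n, n = CARD('n).\<close>

definition is_norm :: "(real^'n \<Rightarrow> real) \<Rightarrow> bool" where
  "is_norm N \<longleftrightarrow>
     (\<forall>x. N x = 0 \<longleftrightarrow> x = 0) \<and>
     (\<forall>x y. N (x + y) \<le> N x + N y) \<and>
     (\<forall>c x. N (c *\<^sub>R x) = \<bar>c\<bar> * N x)"

definition sign_perm_invariant :: "(real^'n \<Rightarrow> real) \<Rightarrow> bool" where
  "sign_perm_invariant N \<longleftrightarrow>
     (\<forall>p x. p permutes (UNIV :: 'n set) \<longrightarrow> N (\<chi> i. x $ p i) = N x) \<and>
     (\<forall>x y. (\<forall>i. \<bar>y $ i\<bar> = \<bar>x $ i\<bar>) \<longrightarrow> N y = N x)"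

definition vcard :: "real^'n \<Rightarrow> nat" where
  "vcard x = card {i. x $ i \<noteq> 0}"

definition NK :: "(real^'n \<Rightarrow> real) \<Rightarrow> nat \<Rightarrow> (real^'n) set" where
  "NK N K = {x. N x \<le> 1 \<and> vcard x \<le> K}"

definition gauge_c :: "(real^'n \<Rightarrow> real) \<Rightarrow> nat \<Rightarrow> real^'n \<Rightarrow> real" where
  "gauge_c N K x = Inf {t. t > 0 \<and> (1 / t) *\<^sub>R x \<in> convex hull (NK N K)}"

definition sorted_abs :: "real^'n \<Rightarrow> real list" where
  "sorted_abs x = rev (sorted_list_of_multiset (image_mset (\<lambda>i. \<bar>x $ i\<bar>) (mset_set UNIV)))"

text \<open>|x|_[i], the i-th largest absolute value, for i = 1..n.\<close>
definition absk :: "real^'n \<Rightarrow> nat \<Rightarrow> real" where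
  "absk x i = sorted_abs x ! (i - 1)"

definition s_fun :: "nat \<Rightarrow> real^'n \<Rightarrow> nat \<Rightarrow> real" where
  "s_fun K x i = (\<Sum>j = i..CARD('n). absk x j) / real (K - i + 1)"

definition i_x :: "nat \<Rightarrow> real^'n \<Rightarrow> nat" where
  "i_x K x = (LEAST i. i \<in> {1..K} \<and> (\<forall>j\<in>{1..K}. s_fun K x i \<le> s_fun K x j))"

definition delta :: "nat \<Rightarrow> real^'n \<Rightarrow> real" where
  "delta K x = s_fun K x (i_x K x)"

text \<open>u(x)_i for i = 1..n.\<close>
definition u_fun :: "nat \<Rightarrow> real^'n \<Rightarrow> nat \<Rightarrow> real" where
  "u_fun K x i = (if i < i_x K x then absk x i else if i \<le> K then delta K x else 0)"

text \<open>A fixed enumeration of the index type by 0..n-1 (any choice works, the norm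
  being permutation invariant).\<close>
definition idx :: "'n::finite \<Rightarrow> nat" where
  "idx = (SOME f. bij_betw f (UNIV :: 'n set) {..<CARD('n)})"

definition u_vec :: "nat \<Rightarrow> real^'n \<Rightarrow> real^'n" where
  "u_vec K x = (\<chi> j. u_fun K x (idx j + 1))"

end

(*
  Let Top be the coordinates carrying the i_x - 1 largest entries of |x|; every entry there
  exceeds delta(x) and every other entry is at most delta(x).

  Upper bound: |x| lies in the polytope of nonnegative vectors that agree with |x| on Top,
  are at most delta off Top and have the same sum there as |x|. Off Top its extreme points
  take only the values 0 and delta, so each is a rearrangement of u(x) with at most K nonzero
  entries. By Krein-Milman and a change of signs, x is a convex combination of K-sparse
  vectors of norm ||u(x)||, hence ||x||_c <= ||u(x)||_s.

  Lower bound: u(x) has a norming functional v in the dual unit ball that is nonnegative,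
  constant (= c) on the delta-block of u(x) and at least c on Top (average over permutations
  of the block; swap entries otherwise). With the signs of x, the functional equal to v on
  Top and to c elsewhere attains ||u(x)|| at x and is bounded by the norm on every K-sparse
  vector, hence by 1 on conv(N^K).
*)

theory Submission
  imports Defs
begin

section \<open>Sign- and permutation-invariant norms\<close>

lemma is_norm_zero: "is_norm N \<Longrightarrow> N 0 = 0"
  unfolding is_norm_def by auto

lemma is_norm_eq_0_iff: "is_norm N \<Longrightarrow> N w = 0 \<longleftrightarrow> w = 0"
  unfolding is_norm_def by auto

lemma is_norm_scaleR: "is_norm N \<Longrightarrow> N (c *\<^sub>R w) = \<bar>c\<bar> * N w"
  unfolding is_norm_def by auto

lemma is_norm_triangle: "is_norm N \<Longrightarrow> N (v + w) \<le> N v + N w"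
  unfolding is_norm_def by auto

lemma is_norm_nonneg:
  assumes "is_norm N" shows "0 \<le> N w"
proof -
  have "N 0 \<le> N w + N (-w)"
    using is_norm_triangle[OF assms, of w "-w"] by simp
  also have "N (-w) = N w"
    using is_norm_scaleR[OF assms, of "-1" w] by simp
  finally show ?thesis using is_norm_zero[OF assms] by simp
qed

lemma is_norm_pos: "is_norm N \<Longrightarrow> w \<noteq> 0 \<Longrightarrow> 0 < N w"
  using is_norm_nonneg is_norm_eq_0_iff by (metis order_le_less)

lemma convex_is_norm_sublevel:
  fixes N :: "real^'n \<Rightarrow> real"
  assumes "is_norm N" shows "convex {w. N w < r}"
proof (rule convexI)
  fix v w :: "real^'n" and a b :: real
  assume vw: "v \<in> {w. N w < r}" "w \<in> {w. N w < r}" and ab: "0 \<le> a" "0 \<le> b" "a + b = 1"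
  have "N (a *\<^sub>R v + b *\<^sub>R w) \<le> a * N v + b * N w"
    using is_norm_triangle[OF assms] is_norm_scaleR[OF assms] ab by (metis abs_of_nonneg)
  also have "\<dots> < r"
  proof (cases "a = 0")
    case False
    hence "a * N v < a * r" using ab vw by simp
    moreover have "b * N w \<le> b * r" using ab vw by (simp add: mult_left_mono)
    ultimately have "a * N v + b * N w < (a + b) * r" by (simp add: distrib_right)
    thus ?thesis using ab(3) by simp
  qed (use ab vw in simp)
  finally show "a *\<^sub>R v + b *\<^sub>R w \<in> {w. N w < r}" by simp
qed

lemma sign_perm_invariant_abs:
  "sign_perm_invariant N \<Longrightarrow> (\<And>j. \<bar>w $ j\<bar> = \<bar>z $ j\<bar>) \<Longrightarrow> N w = N z"
  unfolding sign_perm_invariant_def by auto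

lemma sign_perm_invariant_permute:
  "sign_perm_invariant N \<Longrightarrow> bij h \<Longrightarrow> N (\<chi> j. w $ h j) = N w"
  unfolding sign_perm_invariant_def by (metis bij_imp_permutes iso_tuple_UNIV_I)

lemma sign_perm_invariant_reindex:
  fixes w z :: "real^'n"
  assumes spi: "sign_perm_invariant N" and inj: "inj_on \<beta> S"
    and same: "\<And>j. j \<in> S \<Longrightarrow> \<bar>w $ \<beta> j\<bar> = \<bar>z $ j\<bar>"
    and z0: "\<And>j. j \<notin> S \<Longrightarrow> z $ j = 0"
    and w0: "\<And>d. d \<notin> \<beta> ` S \<Longrightarrow> w $ d = 0"
  shows "N w = N z"
proof -
  have "card (- S) = card (- (\<beta> ` S))"
    using inj by (simp add: card_image Compl_eq_Diff_UNIV card_Diff_subset)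
  then obtain \<gamma> where \<gamma>: "bij_betw \<gamma> (- S) (- (\<beta> ` S))"
    using finite_same_card_bij[OF finite finite] by metis
  define h where "h j = (if j \<in> S then \<beta> j else \<gamma> j)" for j
  have "bij_betw h S (\<beta> ` S)"
    using inj unfolding bij_betw_def inj_on_def h_def by (auto simp: image_iff)
  moreover have "bij_betw h (- S) (- (\<beta> ` S))"
    using \<gamma> unfolding bij_betw_def inj_on_def h_def by auto
  ultimately have "bij_betw h (S \<union> - S) (\<beta> ` S \<union> - (\<beta> ` S))"
    by (rule bij_betw_combine) auto
  hence h: "bij h" by simp
  have "\<bar>w $ h j\<bar> = \<bar>z $ j\<bar>" for j
  proof (cases "j \<in> S")
    case False
    hence "h j \<notin> \<beta> ` S" using \<gamma> unfolding h_def bij_betw_def by auto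
    thus ?thesis using False z0 w0 by auto
  qed (simp add: same h_def)
  hence "N (\<chi> j. w $ h j) = N z" by (intro sign_perm_invariant_abs[OF spi]) simp
  thus ?thesis using sign_perm_invariant_permute[OF spi h] by simp
qed

lemma inj_on_id_Un:
  assumes "inj_on f B" "A \<inter> B = {}" "A \<inter> f ` B = {}"
  shows "inj_on (\<lambda>j. if j \<in> A then j else f j) (A \<union> B)"
    and "(\<lambda>j. if j \<in> A then j else f j) ` (A \<union> B) = A \<union> f ` B"
proof -
  have "inj_on (\<lambda>j. if j \<in> A then j else f j) B"
    using assms(1,2) by (auto simp: inj_on_def)
  moreover have "inj_on (\<lambda>j. if j \<in> A then j else f j) A" by (auto simp: inj_on_def)
  moreover have "A - B = A" "B - A = B" using assms(2) by auto
  ultimately show "inj_on (\<lambda>j. if j \<in> A then j else f j) (A \<union> B)"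
    using assms(2,3) by (auto simp: inj_on_Un image_iff)
  show "(\<lambda>j. if j \<in> A then j else f j) ` (A \<union> B) = A \<union> f ` B"
    using assms(2) by (auto simp: image_iff)
qed

lemma sum_two_valued:
  assumes "finite S" "\<And>j. j \<in> S \<Longrightarrow> f j = 0 \<or> f j = c"
  shows "sum f S = real (card {j\<in>S. f j = c}) * c"
proof -
  have "sum f S = (\<Sum>j\<in>S. if f j = c then c else 0)"
    using assms(2) by (intro sum.cong) auto
  also have "\<dots> = real (card {j\<in>S. f j = c}) * c"
    using assms(1) by (simp add: sum.If_cases Int_def)
  finally show ?thesis .
qed

lemma Inf_eq_if_between_rays:
  fixes a :: real
  assumes "{a<..} \<subseteq> G" "G \<subseteq> {a..}"
  shows "Inf G = a"
proof (rule antisym)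
  have bdd: "bdd_below G" using assms(2) by (intro bdd_belowI[where m = a]) auto
  show "Inf G \<le> a"
  proof (rule dense_ge)
    fix y assume "a < y"
    hence "y \<in> G" using assms(1) by auto
    thus "Inf G \<le> y" using bdd by (rule cInf_lower)
  qed
  have "a + 1 \<in> G" using assms(1) by auto
  thus "a \<le> Inf G" using assms(2) by (intro cInf_greatest) auto
qed

section \<open>Norming functionals\<close>

definition dual_ball :: "(real^'n \<Rightarrow> real) \<Rightarrow> (real^'n) set" where
  "dual_ball N = {v. \<forall>w. w \<bullet> v \<le> N w}"

lemma dual_ball_attains:
  assumes nN: "is_norm N"
  shows "\<exists>v\<in>dual_ball N. p \<bullet> v = N p"
proof (cases "p = 0")
  case True
  thus ?thesis using is_norm_nonneg[OF nN] is_norm_zero[OF nN]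
    by (intro bexI[of _ 0]) (auto simp: dual_ball_def)
next
  case False
  hence Np: "0 < N p" by (rule is_norm_pos[OF nN])
  have "convex ((+) (- p) ` {w. N w < N p})"
    by (simp add: convex_translation_eq convex_is_norm_sublevel[OF nN])
  moreover have "0 \<notin> (+) (- p) ` {w. N w < N p}" by auto
  ultimately obtain a where "a \<noteq> 0" "\<forall>y\<in>(+) (- p) ` {w. N w < N p}. 0 \<le> a \<bullet> y"
    using separating_hyperplane_set_0 by blast
  then obtain b where "b \<noteq> 0" and b: "\<And>w. N w < N p \<Longrightarrow> b \<bullet> w \<le> b \<bullet> p"
    by (intro that[of "- a"]) (auto simp: inner_diff_right)
  \<comment> \<open>Scale \<open>w\<close> into the open ball of radius \<open>N p\<close>.\<close>
  have bw: "N p * (b \<bullet> w) \<le> N w * (b \<bullet> p)" for w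
  proof (cases "w = 0")
    case False
    hence Nw: "0 < N w" by (rule is_norm_pos[OF nN])
    show ?thesis
    proof (rule field_le_mult_one_interval)
      fix z :: real assume z: "0 < z" "z < 1"
      have "N ((z * N p / N w) *\<^sub>R w) = z * N p"
        using is_norm_scaleR[OF nN] Nw Np z by simp
      hence "b \<bullet> ((z * N p / N w) *\<^sub>R w) \<le> b \<bullet> p" using z Np by (intro b) simp
      thus "z * (N p * (b \<bullet> w)) \<le> N w * (b \<bullet> p)"
        using Nw by (simp add: field_simps)
    qed
  qed (simp add: is_norm_zero[OF nN])
  have "0 < b \<bullet> p"
  proof -
    have "0 < N p * (b \<bullet> b)" using Np \<open>b \<noteq> 0\<close> by simp
    also have "\<dots> \<le> N b * (b \<bullet> p)" by (rule bw)
    finally show ?thesis using is_norm_nonneg[OF nN, of b] by (simp add: zero_less_mult_iff)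
  qed
  define v where "v = (N p / (b \<bullet> p)) *\<^sub>R b"
  have "v \<in> dual_ball N"
    using bw \<open>0 < b \<bullet> p\<close> by (auto simp: dual_ball_def v_def inner_commute field_simps)
  moreover have "p \<bullet> v = N p" using \<open>0 < b \<bullet> p\<close> by (simp add: v_def inner_commute)
  ultimately show ?thesis by blast
qed

lemma inner_permute:
  fixes w v :: "real^'n"
  assumes "bij h"
  shows "w \<bullet> (\<chi> j. v $ h j) = (\<chi> j. w $ inv h j) \<bullet> v"
proof -
  have "w \<bullet> (\<chi> j. v $ h j) = (\<Sum>j\<in>UNIV. w $ inv h (h j) * v $ h j)"
    using assms by (simp add: inner_vec_def bij_is_inj)
  also have "\<dots> = (\<Sum>k\<in>UNIV. w $ inv h k * v $ k)"
    using assms by (rule sum.reindex_bij_betw)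
  finally show ?thesis by (simp add: inner_vec_def)
qed

lemma dual_ball_permute:
  assumes spi: "sign_perm_invariant N" and v: "v \<in> dual_ball N" and h: "bij h"
  shows "(\<chi> j. v $ h j) \<in> dual_ball N"
proof -
  have "w \<bullet> (\<chi> j. v $ h j) \<le> N w" for w
  proof -
    have "w \<bullet> (\<chi> j. v $ h j) = (\<chi> j. w $ inv h j) \<bullet> v" by (rule inner_permute[OF h])
    also have "\<dots> \<le> N (\<chi> j. w $ inv h j)" using v by (simp add: dual_ball_def)
    also have "\<dots> = N w" using sign_perm_invariant_permute[OF spi bij_imp_bij_inv[OF h]] .
    finally show ?thesis .
  qed
  thus ?thesis by (simp add: dual_ball_def)
qed

lemma dual_ball_abs:
  assumes spi: "sign_perm_invariant N" and v: "v \<in> dual_ball N"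
  shows "(\<chi> j. \<bar>v $ j\<bar>) \<in> dual_ball N"
proof -
  have "w \<bullet> (\<chi> j. \<bar>v $ j\<bar>) \<le> N w" for w
  proof -
    define w' where "w' = (\<chi> j. if v $ j < 0 then - w $ j else w $ j)"
    have "w \<bullet> (\<chi> j. \<bar>v $ j\<bar>) = w' \<bullet> v"
      unfolding inner_vec_def w'_def by (intro sum.cong) auto
    also have "\<dots> \<le> N w'" using v by (simp add: dual_ball_def)
    also have "N w' = N w"
      by (rule sign_perm_invariant_abs[OF spi]) (simp add: w'_def)
    finally show ?thesis .
  qed
  thus ?thesis by (simp add: dual_ball_def)
qed

lemma dual_ball_maximizer_mono:
  assumes spi: "sign_perm_invariant N" and v: "v \<in> dual_ball N" and uv: "u \<bullet> v = N u"
    and less: "u $ b < u $ j"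
  shows "v $ b \<le> v $ j"
proof (rule ccontr)
  assume "\<not> v $ b \<le> v $ j"
  have "j \<noteq> b" using less by auto
  define \<tau> where "\<tau> = Transposition.transpose j b"
  have "(\<chi> k. v $ \<tau> k) \<in> dual_ball N"
    unfolding \<tau>_def by (rule dual_ball_permute[OF spi v]) simp
  hence le: "u \<bullet> (\<chi> k. v $ \<tau> k) \<le> u \<bullet> v" using uv by (simp add: dual_ball_def)
  have "u \<bullet> (\<chi> k. v $ \<tau> k) - u \<bullet> v = (\<Sum>k\<in>{j, b}. u $ k * (v $ \<tau> k - v $ k))"
    unfolding inner_vec_def by (simp add: sum_subtractf[symmetric] right_diff_distrib \<tau>_def
      sum.mono_neutral_right[of UNIV "{j, b}"])
  also have "\<dots> = (u $ j - u $ b) * (v $ b - v $ j)"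
    using \<open>j \<noteq> b\<close> by (simp add: \<tau>_def algebra_simps)
  finally have "u \<bullet> (\<chi> k. v $ \<tau> k) - u \<bullet> v = (u $ j - u $ b) * (v $ b - v $ j)" .
  moreover have "0 < (u $ j - u $ b) * (v $ b - v $ j)"
    using less \<open>\<not> v $ b \<le> v $ j\<close> by (intro mult_pos_pos) auto
  ultimately show False using le by linarith
qed

lemma dual_ball_symmetrize:
  fixes u v :: "real^'n"
  assumes spi: "sign_perm_invariant N" and v: "v \<in> dual_ball N" and uv: "u \<bullet> v = N u"
    and u_const: "\<And>b b'. b \<in> B \<Longrightarrow> b' \<in> B \<Longrightarrow> u $ b = u $ b'"
  shows "\<exists>v'\<in>dual_ball N. u \<bullet> v' = N u \<and> (\<forall>b\<in>B. \<forall>b'\<in>B. v' $ b = v' $ b')"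
proof -
  define G where "G = {p. p permutes B}"
  have "finite G" unfolding G_def by (rule finite_permutations) simp
  moreover have "id \<in> G" by (simp add: G_def permutes_id)
  ultimately have cG: "0 < card G" by (auto simp: card_gt_0_iff)
  define v' where "v' = (1 / real (card G)) *\<^sub>R (\<Sum>p\<in>G. (\<chi> j. v $ p j))"
  have v'_nth: "v' $ j = (\<Sum>p\<in>G. v $ p j) / real (card G)" for j
    by (simp add: v'_def)
  have average: "w \<bullet> v' = (\<Sum>p\<in>G. w \<bullet> (\<chi> j. v $ p j)) / real (card G)" for w
    by (simp add: v'_def inner_sum_right)
  have "w \<bullet> v' \<le> N w" for w
  proof -
    have "(\<Sum>p\<in>G. w \<bullet> (\<chi> j. v $ p j)) \<le> (\<Sum>p\<in>G. N w)"
      using dual_ball_permute[OF spi v permutes_bij]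
      by (intro sum_mono) (auto simp: G_def dual_ball_def)
    thus ?thesis using cG by (simp add: average divide_le_eq mult.commute)
  qed
  moreover have "u \<bullet> (\<chi> j. v $ p j) = N u" if "p \<in> G" for p
  proof -
    have p: "p permutes B" using that by (simp add: G_def)
    have "u $ inv p j = u $ j" for j
    proof (cases "j \<in> B")
      case True
      hence "inv p j \<in> B" using permutes_in_image[OF permutes_inv[OF p]] by simp
      thus ?thesis using u_const True by blast
    qed (simp add: permutes_not_in[OF permutes_inv[OF p]])
    hence "(\<chi> j. u $ inv p j) = u" by (simp add: vec_eq_iff)
    thus ?thesis using inner_permute[OF permutes_bij[OF p], of u v] uv by simp
  qed
  hence "u \<bullet> v' = N u" using cG by (simp add: average card_gt_0_iff)
  moreover have "v' $ b = v' $ b'" if b: "b \<in> B" "b' \<in> B" for b b'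
  proof -
    define \<tau> where "\<tau> = Transposition.transpose b b'"
    have "\<tau> permutes B" unfolding \<tau>_def by (rule permutes_swap_id[OF b])
    hence "\<And>p. p \<in> G \<Longrightarrow> p \<circ> \<tau> \<in> G" by (simp add: G_def permutes_compose)
    moreover have "\<tau> \<circ> \<tau> = id" "\<tau> b' = b" by (simp_all add: \<tau>_def)
    ultimately have "(\<Sum>p\<in>G. v $ p b) = (\<Sum>q\<in>G. v $ q b')"
      by (intro sum.reindex_bij_witness[where i = "\<lambda>q. q \<circ> \<tau>" and j = "\<lambda>q. q \<circ> \<tau>"])
        (auto simp: o_assoc[symmetric])
    thus ?thesis by (simp add: v'_nth)
  qed
  ultimately show ?thesis by (auto simp: dual_ball_def)
qed

lemma dual_ball_reindex_bound:
  fixes z v :: "real^'n"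
  assumes spi: "sign_perm_invariant N" and v: "v \<in> dual_ball N" and \<beta>: "inj_on \<beta> S"
    and z0: "\<And>j. j \<notin> S \<Longrightarrow> z $ j = 0" and g: "\<And>j. j \<in> S \<Longrightarrow> g j \<le> v $ \<beta> j"
  shows "(\<Sum>j\<in>S. \<bar>z $ j\<bar> * g j) \<le> N z"
proof -
  define w where "w = (\<chi> d. if d \<in> \<beta> ` S then \<bar>z $ inv_into S \<beta> d\<bar> else 0)"
  have w\<beta>: "w $ \<beta> j = \<bar>z $ j\<bar>" if "j \<in> S" for j
    using that \<beta> by (simp add: w_def)
  have "(\<Sum>j\<in>S. \<bar>z $ j\<bar> * g j) \<le> (\<Sum>j\<in>S. w $ \<beta> j * v $ \<beta> j)"
    using g w\<beta> by (intro sum_mono) (simp add: mult_left_mono)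
  also have "\<dots> = (\<Sum>d\<in>\<beta> ` S. w $ d * v $ d)"
    using \<beta> by (simp add: sum.reindex)
  also have "\<dots> = w \<bullet> v"
    unfolding inner_vec_def inner_real_def by (rule sum.mono_neutral_left) (auto simp: w_def)
  also have "\<dots> \<le> N w" using v by (simp add: dual_ball_def)
  also have "N w = N z"
    by (rule sign_perm_invariant_reindex[OF spi \<beta>]) (use w\<beta> z0 in \<open>auto simp: w_def\<close>)
  finally show ?thesis .
qed

section \<open>The decreasing rearrangement\<close>

lemma idx_bij: "bij_betw (idx :: 'n::finite \<Rightarrow> nat) UNIV {..<CARD('n)}"
proof -
  obtain h where "bij_betw h {0..<CARD('n)} (UNIV :: 'n set)"
    using ex_bij_betw_nat_finite[of "UNIV :: 'n set"] by auto
  hence "\<exists>f. bij_betw f (UNIV :: 'n set) {..<CARD('n)}"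
    using bij_betw_inv_into by (auto simp: atLeast0LessThan)
  then show ?thesis unfolding idx_def by (rule someI_ex)
qed

lemma bij_betw_Suc_idx_permute:
  fixes p :: "'n::finite \<Rightarrow> 'n"
  assumes "p permutes UNIV"
  shows "bij_betw (\<lambda>j. Suc (idx (p j))) UNIV {1..CARD('n)}"
proof -
  have "bij_betw Suc {..<CARD('n)} {1..CARD('n)}"
    by (rule bij_betw_byWitness[where f' = "\<lambda>k. k - 1"]) auto
  from bij_betw_trans[OF bij_betw_trans[OF permutes_imp_bij[OF assms] idx_bij] this]
  show ?thesis by (simp add: o_def)
qed

lemma mset_sorted_abs: "mset (sorted_abs x) = image_mset (\<lambda>i. \<bar>x $ i\<bar>) (mset_set UNIV)"
  by (simp add: sorted_abs_def)

lemma length_sorted_abs: "length (sorted_abs (x :: real^'n)) = CARD('n)"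
  using mset_sorted_abs[of x] by (metis size_image_mset size_mset size_mset_set)

lemma absk_antimono:
  fixes x :: "real^'n"
  assumes "1 \<le> i" "i \<le> j" "j \<le> CARD('n)"
  shows "absk x j \<le> absk x i"
proof -
  let ?L = "sorted_list_of_multiset (image_mset (\<lambda>i. \<bar>x $ i\<bar>) (mset_set (UNIV :: 'n set)))"
  have len: "length ?L = CARD('n)" using length_sorted_abs[of x] by (simp add: sorted_abs_def)
  have "?L ! (CARD('n) - j) \<le> ?L ! (CARD('n) - i)"
    using assms len by (intro sorted_nth_mono) auto
  thus ?thesis using assms len by (simp add: absk_def sorted_abs_def rev_nth Suc_diff_Suc)
qed

lemma absk_nonneg:
  fixes x :: "real^'n"
  assumes "1 \<le> i" "i \<le> CARD('n)"
  shows "0 \<le> absk x i"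
proof -
  have "absk x i \<in> set (sorted_abs x)"
    using assms length_sorted_abs[of x] by (simp add: absk_def)
  hence "absk x i \<in> set_mset (mset (sorted_abs x))" by simp
  thus ?thesis unfolding mset_sorted_abs by auto
qed

lemma abs_eq_absk_permute:
  fixes x :: "real^'n"
  obtains p where "p permutes UNIV" "\<And>j. \<bar>x $ j\<bar> = absk x (Suc (idx (p j)))"
proof -
  let ?L = "sorted_abs x"
  have "image_mset (\<lambda>j. ?L ! idx j) (mset_set (UNIV :: 'n set))
      = image_mset (nth ?L) (image_mset idx (mset_set (UNIV :: 'n set)))"
    by (simp add: multiset.map_comp o_def)
  also have "image_mset idx (mset_set (UNIV :: 'n set)) = mset_set {..<CARD('n)}"
    using idx_bij[where 'n = 'n] by (simp add: image_mset_mset_set bij_betw_def)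
  also have "image_mset (nth ?L) (mset_set {..<CARD('n)}) = mset (map (nth ?L) [0..<length ?L])"
    by (simp add: length_sorted_abs atLeast0LessThan[symmetric])
  also have "\<dots> = image_mset (\<lambda>j. \<bar>x $ j\<bar>) (mset_set UNIV)"
    by (simp add: map_nth mset_sorted_abs)
  finally obtain p where "p permutes UNIV" "\<forall>j\<in>UNIV. \<bar>x $ j\<bar> = ?L ! idx (p j)"
    by (rule image_mset_eq_implies_permutes[OF finite sym])
  thus ?thesis using that by (simp add: absk_def)
qed

section \<open>The blocks of u(x) and the upper bound polytope\<close>

text \<open>\<open>rank j\<close> is the position of \<open>|x $ j|\<close> in the decreasing rearrangement (ties broken
  arbitrarily). \<open>Top\<close>, \<open>Mid\<close>, \<open>Low\<close> are the coordinates of ranks \<open>i < i_x\<close>,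
  \<open>i_x \<le> i \<le> K\<close> and \<open>i \<ge> i_x\<close>, and \<open>ux\<close> is u(x) with each entry moved to the
  coordinate of the corresponding rank.\<close>

locale ranked_vector =
  fixes K :: nat and x :: "real^'n" and rank :: "'n \<Rightarrow> nat"
  assumes K_pos: "1 \<le> K" and K_le: "K \<le> CARD('n)"
    and rank_bij: "bij_betw rank UNIV {1..CARD('n)}"
    and abs_rank: "\<And>j. \<bar>x $ j\<bar> = absk x (rank j)"
begin

definition "ix = i_x K x"
definition "\<delta> = delta K x"
definition "m = K - ix + 1"
definition "tail i = (\<Sum>j = i..CARD('n). absk x j)"
definition "Top = {j. rank j < ix}"
definition "Mid = {j. ix \<le> rank j \<and> rank j \<le> K}"
definition "Low = {j. ix \<le> rank j}"
definition "ux = (\<chi> j. u_fun K x (rank j))"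

lemma rank_range: "1 \<le> rank j" "rank j \<le> CARD('n)"
  using rank_bij by (auto simp: bij_betw_def)

lemma s_fun_tail: "s_fun K x i = tail i / real (K - i + 1)"
  unfolding s_fun_def tail_def by simp

lemma ix_minimal:
  shows ix_range: "ix \<in> {1..K}"
    and delta_le_s_fun: "\<And>j. j \<in> {1..K} \<Longrightarrow> \<delta> \<le> s_fun K x j"
    and delta_less_s_fun: "\<And>i. 1 \<le> i \<Longrightarrow> i < ix \<Longrightarrow> \<delta> < s_fun K x i"
proof -
  let ?P = "\<lambda>i. i \<in> {1..K} \<and> (\<forall>j\<in>{1..K}. s_fun K x i \<le> s_fun K x j)"
  have "Min (s_fun K x ` {1..K}) \<in> s_fun K x ` {1..K}"
    using K_pos by (intro Min_in) auto
  then obtain i0 where "i0 \<in> {1..K}" "Min (s_fun K x ` {1..K}) = s_fun K x i0" by blast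
  hence "?P i0" by (metis Min_le finite_atLeastAtMost finite_imageI imageI)
  hence P: "?P ix" unfolding ix_def i_x_def by (rule LeastI)
  thus "ix \<in> {1..K}" "\<And>j. j \<in> {1..K} \<Longrightarrow> \<delta> \<le> s_fun K x j"
    by (auto simp: \<delta>_def delta_def ix_def)
  fix i assume i: "1 \<le> i" "i < ix"
  hence "\<not> ?P i" unfolding ix_def i_x_def using not_less_Least by blast
  with i P show "\<delta> < s_fun K x i" by (force simp: \<delta>_def delta_def ix_def)
qed

lemma ix_ge_1: "1 \<le> ix" and ix_le_K: "ix \<le> K"
  using ix_range by auto

lemma tail_Suc: "i \<le> CARD('n) \<Longrightarrow> tail i = absk x i + tail (Suc i)"
  unfolding tail_def by (rule sum.atLeast_Suc_atMost)

lemma tail_ix: "tail ix = real m * \<delta>"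
  unfolding \<delta>_def delta_def ix_def[symmetric] s_fun_tail m_def by simp

lemma delta_nonneg: "0 \<le> \<delta>"
proof -
  have "0 \<le> tail ix"
    unfolding tail_def using ix_ge_1 by (intro sum_nonneg absk_nonneg) auto
  thus ?thesis using tail_ix by (simp add: m_def zero_le_mult_iff)
qed

text \<open>Both bounds compare \<open>s\<close> at \<open>ix\<close> with \<open>s\<close> at \<open>ix - 1\<close> and at \<open>ix + 1\<close>.\<close>

lemma delta_less_absk:
  assumes r: "1 \<le> r" "r < ix"
  shows "\<delta> < absk x r"
proof -
  define i where "i = ix - 1"
  have i: "1 \<le> i" "Suc i = ix" "r \<le> i" "i \<le> CARD('n)"
    using r ix_le_K K_le unfolding i_def by auto
  have "K - i + 1 = m + 1" unfolding m_def using i ix_le_K by simp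
  hence "\<delta> < tail i / real (m + 1)"
    using delta_less_s_fun[of i] i by (simp add: s_fun_tail)
  also have "tail i = absk x i + real m * \<delta>"
    using tail_Suc[OF i(4)] i tail_ix by simp
  finally have "\<delta> < absk x i" by (simp add: field_simps)
  also have "absk x i \<le> absk x r" using absk_antimono[of r i x] i r by simp
  finally show ?thesis .
qed

lemma absk_le_delta:
  assumes r: "ix \<le> r" "r \<le> CARD('n)"
  shows "absk x r \<le> \<delta>"
proof -
  have split: "tail ix = absk x ix + tail (Suc ix)"
    using tail_Suc ix_le_K K_le by simp
  have "absk x ix \<le> \<delta>"
  proof (cases "ix < K")
    case True
    hence m: "m = Suc (K - Suc ix + 1)" unfolding m_def by simp
    have "\<delta> \<le> s_fun K x (Suc ix)" using delta_le_s_fun True ix_ge_1 by auto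
    hence "\<delta> * (real m - 1) \<le> tail (Suc ix)"
      using True by (simp add: s_fun_tail m field_simps)
    thus ?thesis using split tail_ix by (simp add: algebra_simps)
  next
    case False
    hence "m = 1" using ix_le_K unfolding m_def by simp
    moreover have "0 \<le> tail (Suc ix)"
      unfolding tail_def by (intro sum_nonneg absk_nonneg) auto
    ultimately show ?thesis using split tail_ix by simp
  qed
  also have "absk x r \<le> absk x ix" using absk_antimono ix_ge_1 r by auto
  finally show ?thesis by simp
qed

lemma delta_less_abs_Top: "j \<in> Top \<Longrightarrow> \<delta> < \<bar>x $ j\<bar>"
  unfolding Top_def using delta_less_absk rank_range abs_rank by auto

lemma abs_Low_le_delta: "j \<in> Low \<Longrightarrow> \<bar>x $ j\<bar> \<le> \<delta>"
  unfolding Low_def using absk_le_delta rank_range abs_rank by auto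

lemma Low_eq: "Low = - Top" and Mid_subset_Low: "Mid \<subseteq> Low" and Top_Mid_disjoint: "Top \<inter> Mid = {}"
  unfolding Top_def Low_def Mid_def by auto

lemma ux_eq: "ux $ j = (if j \<in> Top then \<bar>x $ j\<bar> else if j \<in> Mid then \<delta> else 0)"
  unfolding ux_def u_fun_def Top_def Mid_def ix_def[symmetric] \<delta>_def[symmetric] abs_rank by auto

lemma ux_nonneg: "0 \<le> ux $ j"
  using delta_nonneg by (simp add: ux_eq)

lemma bij_betw_rank_Collect: "bij_betw rank {j. P (rank j)} {r \<in> {1..CARD('n)}. P r}"
proof -
  have "rank ` {j. P (rank j)} = {r \<in> range rank. P r}" by auto
  thus ?thesis using rank_bij by (auto simp: bij_betw_def intro: inj_on_subset)
qed

lemma card_rank_Collect: "card {j. P (rank j)} = card {r \<in> {1..CARD('n)}. P r}"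
  using bij_betw_rank_Collect by (rule bij_betw_same_card)

lemma card_Top_Mid: "card Top + m = K" and card_Mid: "card Mid = m"
proof -
  have "{r \<in> {1..CARD('n)}. r < ix} = {1..<ix}" "{r \<in> {1..CARD('n)}. ix \<le> r \<and> r \<le> K} = {ix..K}"
    using ix_ge_1 ix_le_K K_le by auto
  thus "card Mid = m" "card Top + m = K"
    using card_rank_Collect[of "\<lambda>r. r < ix"] card_rank_Collect[of "\<lambda>r. ix \<le> r \<and> r \<le> K"]
      ix_ge_1 ix_le_K by (simp_all add: Top_def Mid_def m_def)
qed

lemma sum_abs_Low: "(\<Sum>j\<in>Low. \<bar>x $ j\<bar>) = real m * \<delta>"
proof -
  have "{r \<in> {1..CARD('n)}. ix \<le> r} = {ix..CARD('n)}" using ix_ge_1 by auto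
  hence "bij_betw rank Low {ix..CARD('n)}"
    using bij_betw_rank_Collect[of "\<lambda>r. ix \<le> r"] by (simp add: Low_def)
  hence "(\<Sum>j\<in>Low. absk x (rank j)) = tail ix"
    unfolding tail_def by (rule sum.reindex_bij_betw)
  thus ?thesis using tail_ix abs_rank by simp
qed

definition "Spread = {t. (\<forall>j\<in>Top. t $ j = \<bar>x $ j\<bar>) \<and> (\<forall>j\<in>Low. 0 \<le> t $ j \<and> t $ j \<le> \<delta>)
   \<and> (\<Sum>j\<in>Low. t $ j) = real m * \<delta>}"

lemma abs_in_Spread: "(\<chi> j. \<bar>x $ j\<bar>) \<in> Spread"
  unfolding Spread_def using abs_Low_le_delta sum_abs_Low by auto

lemma convex_Spread: "convex Spread"
proof (rule convexI)
  fix s t and a b :: real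
  assume st: "s \<in> Spread" "t \<in> Spread" and ab: "0 \<le> a" "0 \<le> b" "a + b = 1"
  have "0 \<le> a * s $ j + b * t $ j \<and> a * s $ j + b * t $ j \<le> \<delta>" if "j \<in> Low" for j
  proof -
    have "a * s $ j \<le> a * \<delta>" "b * t $ j \<le> b * \<delta>"
      using st that ab by (auto simp: Spread_def intro: mult_left_mono)
    hence "a * s $ j + b * t $ j \<le> (a + b) * \<delta>" by (simp add: distrib_right)
    thus ?thesis using st that ab by (auto simp: Spread_def)
  qed
  moreover have "(\<Sum>j\<in>Low. a * s $ j + b * t $ j) = (a + b) * (real m * \<delta>)"
    using st by (simp add: Spread_def sum.distrib sum_distrib_left[symmetric] distrib_right)
  ultimately show "a *\<^sub>R s + b *\<^sub>R t \<in> Spread"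
    using st ab by (auto simp: Spread_def distrib_right[symmetric])
qed

lemma compact_Spread: "compact Spread"
proof -
  have "open {t :: real^'n. P}" for P by (cases P) auto
  hence "closed Spread"
    unfolding Spread_def Ball_def
    by (intro closed_Collect_conj closed_Collect_all closed_Collect_imp closed_Collect_eq
        closed_Collect_le continuous_intros)
  moreover have "bounded Spread"
    unfolding bounded_iff
  proof (intro exI ballI)
    fix t assume t: "t \<in> Spread"
    have "\<bar>t $ j\<bar> \<le> \<bar>x $ j\<bar> + \<delta>" for j
    proof (cases "j \<in> Top")
      case False
      hence "0 \<le> t $ j" "t $ j \<le> \<delta>" using t Low_eq by (auto simp: Spread_def)
      thus ?thesis by simp
    qed (use t delta_nonneg in \<open>simp add: Spread_def\<close>)
    hence "(\<Sum>j\<in>UNIV. \<bar>t $ j\<bar>) \<le> (\<Sum>j\<in>UNIV. \<bar>x $ j\<bar> + \<delta>)" by (intro sum_mono)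
    thus "norm t \<le> (\<Sum>j\<in>UNIV. \<bar>x $ j\<bar> + \<delta>)" using norm_le_l1_cart[of t] by linarith
  qed
  ultimately show ?thesis by (simp add: compact_eq_bounded_closed)
qed

definition "transfer j j' = (\<chi> k. (if k = j then 1 else 0) - (if k = j' then 1 else (0::real)))"

lemma Spread_add_transfer:
  assumes e: "e \<in> Spread" and j: "j \<in> Low" "j' \<in> Low" "j \<noteq> j'"
    and s: "0 \<le> e $ j + s" "e $ j + s \<le> \<delta>" "0 \<le> e $ j' - s" "e $ j' - s \<le> \<delta>"
  shows "e + s *\<^sub>R transfer j j' \<in> Spread"
proof -
  have c: "(e + s *\<^sub>R transfer j j') $ k
      = e $ k + (if k = j then s else 0) - (if k = j' then s else 0)" for k
    by (simp add: transfer_def)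
  have "(\<Sum>k\<in>Low. (e + s *\<^sub>R transfer j j') $ k) = (\<Sum>k\<in>Low. e $ k)"
    unfolding c using j by (simp add: sum.distrib sum_subtractf)
  thus ?thesis using e s j Low_eq unfolding Spread_def mem_Collect_eq c by auto
qed

text \<open>On \<open>Low\<close> an extreme point takes only the values 0 and \<open>\<delta>\<close>: otherwise, since the sum
  over \<open>Low\<close> is an integer multiple of \<open>\<delta>\<close>, a second entry lies strictly between them,
  and mass can be moved between the two entries in both directions.\<close>

lemma extreme_point_Spread_values:
  assumes ext: "e extreme_point_of Spread" and j: "j \<in> Low"
  shows "e $ j = 0 \<or> e $ j = \<delta>"
proof (rule ccontr)
  assume ne: "\<not> (e $ j = 0 \<or> e $ j = \<delta>)"
  have eS: "e \<in> Spread" using ext by (simp add: extreme_point_of_def)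
  have ej: "0 < e $ j" "e $ j < \<delta>" using eS j ne unfolding Spread_def by force+
  have "\<exists>j'\<in>Low - {j}. 0 < e $ j' \<and> e $ j' < \<delta>"
  proof (rule ccontr)
    assume "\<not> ?thesis"
    hence "\<And>k. k \<in> Low - {j} \<Longrightarrow> e $ k = 0 \<or> e $ k = \<delta>"
      using eS unfolding Spread_def by force
    hence "(\<Sum>k\<in>Low - {j}. e $ k) = real (card {k\<in>Low - {j}. e $ k = \<delta>}) * \<delta>"
      by (intro sum_two_valued) auto
    moreover have "(\<Sum>k\<in>Low. e $ k) = e $ j + (\<Sum>k\<in>Low - {j}. e $ k)"
      using j by (simp add: sum.remove)
    ultimately have "e $ j = of_int (int m - int (card {k\<in>Low - {j}. e $ k = \<delta>})) * \<delta>"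
      using eS by (simp add: Spread_def algebra_simps)
    then obtain i :: int where "e $ j = of_int i * \<delta>" by blast
    hence "0 < i" "i < 1"
      using ej delta_nonneg by (auto simp: zero_less_mult_iff mult_less_cancel_right2)
    thus False by simp
  qed
  then obtain j' where j': "j' \<in> Low" "j' \<noteq> j" "0 < e $ j'" "e $ j' < \<delta>" by blast
  define \<epsilon> where "\<epsilon> = min (min (e $ j) (\<delta> - e $ j)) (min (e $ j') (\<delta> - e $ j'))"
  have "0 < \<epsilon>" using ej j' by (simp add: \<epsilon>_def)
  have in_Spread: "e + s *\<^sub>R transfer j j' \<in> Spread" if "\<bar>s\<bar> \<le> \<epsilon>" for s
    by (rule Spread_add_transfer[OF eS j j'(1) j'(2)[symmetric]])
      (use that in \<open>auto simp: \<epsilon>_def abs_le_iff\<close>)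
  have "e + \<epsilon> *\<^sub>R transfer j j' \<noteq> e + (- \<epsilon>) *\<^sub>R transfer j j'"
    using \<open>0 < \<epsilon>\<close> j'(2) by (auto simp: transfer_def vec_eq_iff)
  moreover have "midpoint (e + \<epsilon> *\<^sub>R transfer j j') (e + (- \<epsilon>) *\<^sub>R transfer j j') = e"
    by (simp add: midpoint_def vec_eq_iff)
  ultimately have "e \<in> open_segment (e + \<epsilon> *\<^sub>R transfer j j') (e + (- \<epsilon>) *\<^sub>R transfer j j')"
    using midpoint_in_open_segment by metis
  thus False using ext in_Spread[of \<epsilon>] in_Spread[of "- \<epsilon>"] \<open>0 < \<epsilon>\<close>
    unfolding extreme_point_of_def by auto
qed

definition flip :: "real^'n \<Rightarrow> real^'n" where
  "flip t = (\<chi> j. if x $ j < 0 then - (t $ j) else t $ j)"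

lemma linear_flip: "linear flip"
  by (rule linearI) (simp_all add: flip_def vec_eq_iff)

lemma abs_flip: "\<bar>flip t $ j\<bar> = \<bar>t $ j\<bar>"
  by (simp add: flip_def)

lemma inner_flip: "x \<bullet> flip t = (\<chi> j. \<bar>x $ j\<bar>) \<bullet> t"
  unfolding inner_vec_def flip_def by (intro sum.cong) auto

lemma inner_flip_le:
  assumes "\<And>j. 0 \<le> t $ j"
  shows "z \<bullet> flip t \<le> (\<chi> j. \<bar>z $ j\<bar>) \<bullet> t"
proof -
  have "z $ j * flip t $ j \<le> \<bar>z $ j\<bar> * t $ j" for j
    using abs_ge_self[of "z $ j * flip t $ j"] abs_flip[of t j] assms[of j] by (simp add: abs_mult)
  thus ?thesis unfolding inner_vec_def by (simp add: sum_mono)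
qed

end

section \<open>Both bounds on the gauge\<close>

locale ranked_vector_norm = ranked_vector K x rank
  for K and x :: "real^'n" and rank +
  fixes N :: "real^'n \<Rightarrow> real"
  assumes norm_N: "is_norm N" and invariant_N: "sign_perm_invariant N"
begin

lemma extreme_point_Spread:
  assumes ext: "e extreme_point_of Spread"
  shows "N e = N ux \<and> vcard e \<le> K"
proof -
  have eS: "e \<in> Spread" using ext by (simp add: extreme_point_of_def)
  have eTop: "\<And>j. j \<in> Top \<Longrightarrow> e $ j = \<bar>x $ j\<bar>" using eS by (simp add: Spread_def)
  have eLow: "\<And>j. j \<notin> Top \<Longrightarrow> e $ j = 0 \<or> e $ j = \<delta>"
    using extreme_point_Spread_values[OF ext] Low_eq by auto
  show ?thesis
  proof (cases "\<delta> = 0")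
    case True
    have "N e = N ux"
      by (rule sign_perm_invariant_abs[OF invariant_N]) (use eTop eLow True in \<open>auto simp: ux_eq\<close>)
    moreover have "vcard e \<le> card Top"
      unfolding vcard_def using eLow True by (intro card_mono) auto
    ultimately show ?thesis using card_Top_Mid by simp
  next
    case False
    define M where "M = {j\<in>Low. e $ j = \<delta>}"
    have "real (card M) * \<delta> = real m * \<delta>"
      using sum_two_valued[of Low "($) e" \<delta>] eLow eS Low_eq by (simp add: M_def Spread_def)
    hence "card M = card Mid" using False card_Mid by simp
    then obtain f where f: "bij_betw f M Mid" using finite_same_card_bij[OF finite finite] by metis
    have f_inj: "inj_on f M" using f by (simp add: bij_betw_def)
    have disj: "Top \<inter> M = {}" "Top \<inter> f ` M = {}"
      using f Top_Mid_disjoint Low_eq by (auto simp: M_def bij_betw_def)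
    have "N ux = N e"
    proof (rule sign_perm_invariant_reindex[OF invariant_N inj_on_id_Un(1)[OF f_inj disj]])
      show "\<bar>ux $ (if j \<in> Top then j else f j)\<bar> = \<bar>e $ j\<bar>" if "j \<in> Top \<union> M" for j
        using that f eTop Top_Mid_disjoint by (auto simp: ux_eq M_def bij_betw_def)
      show "e $ j = 0" if "j \<notin> Top \<union> M" for j using that eLow Low_eq by (auto simp: M_def)
      show "ux $ d = 0" if "d \<notin> (\<lambda>j. if j \<in> Top then j else f j) ` (Top \<union> M)" for d
        using that inj_on_id_Un(2)[OF f_inj disj] f by (auto simp: ux_eq bij_betw_def)
    qed
    moreover have "vcard e \<le> card (Top \<union> M)"
      unfolding vcard_def using eLow by (intro card_mono) (auto simp: M_def Low_eq)
    hence "vcard e \<le> K" using card_Un_le[of Top M] card_Top_Mid card_Mid \<open>card M = card Mid\<close> by linarith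
    ultimately show ?thesis by simp
  qed
qed

lemma x_in_convex_hull_sparse: "x \<in> convex hull {y. N y = N ux \<and> vcard y \<le> K}"
proof -
  have "(\<chi> j. \<bar>x $ j\<bar>) \<in> convex hull {e. e extreme_point_of Spread}"
    using abs_in_Spread Krein_Milman_Minkowski[OF compact_Spread convex_Spread] by auto
  moreover have "flip (\<chi> j. \<bar>x $ j\<bar>) = x" by (simp add: flip_def vec_eq_iff)
  ultimately have "x \<in> flip ` (convex hull {e. e extreme_point_of Spread})" by (metis imageI)
  also have "\<dots> = convex hull (flip ` {e. e extreme_point_of Spread})"
    by (rule convex_hull_linear_image[OF linear_flip])
  also have "\<dots> \<subseteq> convex hull {y. N y = N ux \<and> vcard y \<le> K}"
  proof (rule hull_mono, safe)
    fix e assume "e extreme_point_of Spread"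
    moreover have "N (flip e) = N e" by (rule sign_perm_invariant_abs[OF invariant_N abs_flip])
    moreover have "vcard (flip e) = vcard e" using abs_flip by (simp add: vcard_def flip_def)
    ultimately show "N (flip e) = N ux" "vcard (flip e) \<le> K" using extreme_point_Spread by auto
  qed
  finally show ?thesis .
qed

lemma scaled_in_convex_hull_NK:
  assumes "N ux < t"
  shows "(1 / t) *\<^sub>R x \<in> convex hull (NK N K)"
proof -
  have t: "0 < t" using assms is_norm_nonneg[OF norm_N, of ux] by simp
  let ?E = "{y. N y = N ux \<and> vcard y \<le> K}"
  have "(1 / t) *\<^sub>R x \<in> (*\<^sub>R) (1 / t) ` (convex hull ?E)"
    using x_in_convex_hull_sparse by blast
  also have "\<dots> = convex hull ((*\<^sub>R) (1 / t) ` ?E)" by (rule convex_hull_scaling[symmetric])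
  also have "\<dots> \<subseteq> convex hull (NK N K)"
  proof (rule hull_mono, safe)
    fix y assume "N y = N ux" "vcard y \<le> K"
    thus "(1 / t) *\<^sub>R y \<in> NK N K"
      using assms t by (simp add: NK_def vcard_def is_norm_scaleR[OF norm_N])
  qed
  finally show ?thesis .
qed

lemma norming_functional:
  obtains v c where "v \<in> dual_ball N" "ux \<bullet> v = N ux" "0 \<le> c"
    "\<And>b. b \<in> Mid \<Longrightarrow> v $ b = c" "\<And>j. j \<in> Top \<Longrightarrow> c \<le> v $ j"
proof -
  obtain v0 where v0: "v0 \<in> dual_ball N" "ux \<bullet> v0 = N ux"
    using dual_ball_attains[OF norm_N] by blast
  have "ux $ b = ux $ b'" if "b \<in> Mid" "b' \<in> Mid" for b b'
    using that Top_Mid_disjoint by (auto simp: ux_eq)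
  from dual_ball_symmetrize[OF invariant_N v0 this]
  obtain v1 where v1: "v1 \<in> dual_ball N" "ux \<bullet> v1 = N ux"
    and v1_const: "\<forall>b\<in>Mid. \<forall>b'\<in>Mid. v1 $ b = v1 $ b'" by blast
  define v where "v = (\<chi> j. \<bar>v1 $ j\<bar>)"
  have v: "v \<in> dual_ball N" unfolding v_def by (rule dual_ball_abs[OF invariant_N v1(1)])
  have "ux \<bullet> v1 \<le> ux \<bullet> v"
    unfolding inner_vec_def v_def by (intro sum_mono) (simp add: mult_left_mono ux_nonneg)
  moreover have "ux \<bullet> v \<le> N ux" using v by (simp add: dual_ball_def)
  ultimately have uv: "ux \<bullet> v = N ux" using v1(2) by simp
  have "Mid \<noteq> {}" using card_Mid by (auto simp: m_def)
  then obtain b0 where b0: "b0 \<in> Mid" by blast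
  show ?thesis
  proof (rule that[OF v uv, of "v $ b0"])
    show "v $ b = v $ b0" if "b \<in> Mid" for b
    proof -
      have "v1 $ b = v1 $ b0" using that b0 v1_const by blast
      thus ?thesis by (simp add: v_def)
    qed
    show "v $ b0 \<le> v $ j" if "j \<in> Top" for j
    proof (rule dual_ball_maximizer_mono[OF invariant_N v uv])
      show "ux $ b0 < ux $ j"
        using that b0 delta_less_abs_Top Top_Mid_disjoint by (auto simp: ux_eq)
    qed
  qed (simp add: v_def)
qed

text \<open>For \<open>K\<close>-sparse \<open>z\<close>, the support of \<open>z\<close> outside \<open>Top\<close> is moved injectively into the
  unused part of \<open>Top \<union> Mid\<close>, where \<open>v \<ge> c\<close>; this bounds \<open>z \<bullet> y\<close> by \<open>v\<close> applied to a
  rearrangement of \<open>|z|\<close>.\<close>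

lemma sparse_norming_functional:
  obtains y where "x \<bullet> y = N ux" "\<And>z. vcard z \<le> K \<Longrightarrow> z \<bullet> y \<le> N z"
proof -
  obtain v c where v: "v \<in> dual_ball N" "ux \<bullet> v = N ux" and "0 \<le> c"
    and vMid: "\<And>b. b \<in> Mid \<Longrightarrow> v $ b = c" and vTop: "\<And>j. j \<in> Top \<Longrightarrow> c \<le> v $ j"
    using norming_functional by blast
  define g where "g = (\<chi> j. if j \<in> Top then v $ j else c)"
  have "0 \<le> v $ j" if "j \<in> Top" for j using vTop[OF that] \<open>0 \<le> c\<close> by linarith
  hence g_nonneg: "0 \<le> g $ j" for j using \<open>0 \<le> c\<close> by (simp add: g_def)
  have split: "sum f UNIV = sum f Top + sum f Low" for f :: "'n \<Rightarrow> real"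
  proof -
    have "UNIV = Top \<union> Low" "Top \<inter> Low = {}" by (auto simp: Low_eq)
    thus ?thesis by (metis finite sum.union_disjoint)
  qed
  have "x \<bullet> flip g = (\<Sum>j\<in>Top. \<bar>x $ j\<bar> * v $ j) + c * (\<Sum>j\<in>Low. \<bar>x $ j\<bar>)"
    unfolding inner_flip unfolding inner_vec_def split
    by (simp add: g_def Low_eq sum_distrib_left mult.commute)
  also have "\<dots> = (\<Sum>j\<in>Top. ux $ j * v $ j) + (\<Sum>j\<in>Mid. ux $ j * v $ j)"
  proof -
    have "(\<Sum>j\<in>Top. ux $ j * v $ j) = (\<Sum>j\<in>Top. \<bar>x $ j\<bar> * v $ j)"
      by (intro sum.cong) (auto simp: ux_eq)
    moreover have "(\<Sum>j\<in>Mid. ux $ j * v $ j) = (\<Sum>j\<in>Mid. \<delta> * c)"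
      using Top_Mid_disjoint by (intro sum.cong) (auto simp: ux_eq vMid)
    ultimately show ?thesis by (simp add: sum_abs_Low card_Mid)
  qed
  also have "(\<Sum>j\<in>Mid. ux $ j * v $ j) = (\<Sum>j\<in>Low. ux $ j * v $ j)"
    using Mid_subset_Low Low_eq by (intro sum.mono_neutral_left) (auto simp: ux_eq)
  also have "(\<Sum>j\<in>Top. ux $ j * v $ j) + \<dots> = N ux"
    using v(2) by (simp add: inner_vec_def split)
  finally have xy: "x \<bullet> flip g = N ux" .
  have "z \<bullet> flip g \<le> N z" if "vcard z \<le> K" for z
  proof -
    define S where "S = {j. z $ j \<noteq> 0}"
    define A where "A = S \<inter> Top"
    define B where "B = S - Top"
    define D where "D = (Top - S) \<union> Mid"
    have "S = A \<union> B" "A \<inter> B = {}" by (auto simp: A_def B_def)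
    hence "card S = card A + card B" by (simp add: card_Un_disjoint)
    moreover have "card D = card (Top - S) + card Mid"
      unfolding D_def by (rule card_Un_disjoint) (use Top_Mid_disjoint in auto)
    moreover have "card (Top - S) = card Top - card A"
      unfolding A_def by (simp add: card_Diff_subset_Int Int_commute)
    moreover have "card A \<le> card Top" unfolding A_def by (intro card_mono) auto
    ultimately have "card B \<le> card D"
      using that card_Top_Mid card_Mid unfolding vcard_def S_def[symmetric] by linarith
    then obtain f where f: "inj_on f B" "f ` B \<subseteq> D" using card_le_inj[OF finite finite] by blast
    have disj: "A \<inter> B = {}" "A \<inter> f ` B = {}"
      using f(2) Top_Mid_disjoint by (auto simp: A_def B_def D_def)
    have "z \<bullet> flip g \<le> (\<Sum>j\<in>UNIV. \<bar>z $ j\<bar> * g $ j)"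
      using inner_flip_le[OF g_nonneg] by (simp add: inner_vec_def)
    also have "\<dots> = (\<Sum>j\<in>A \<union> B. \<bar>z $ j\<bar> * g $ j)"
      by (rule sum.mono_neutral_right) (auto simp: \<open>S = A \<union> B\<close>[symmetric] S_def)
    also have "\<dots> \<le> N z"
    proof (rule dual_ball_reindex_bound[OF invariant_N v(1) inj_on_id_Un(1)[OF f(1) disj]])
      show "z $ j = 0" if "j \<notin> A \<union> B" for j using that by (auto simp: \<open>S = A \<union> B\<close>[symmetric] S_def)
      show "g $ j \<le> v $ (if j \<in> A then j else f j)" if "j \<in> A \<union> B" for j
      proof (cases "j \<in> A")
        case False
        hence "f j \<in> Top \<union> Mid" "g $ j = c"
          using that f(2) by (auto simp: D_def A_def B_def g_def)
        thus ?thesis using False vTop vMid by auto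
      qed (simp add: g_def A_def)
    qed
    finally show ?thesis .
  qed
  show ?thesis by (rule that[OF xy]) fact
qed

lemma norm_ux_le:
  assumes t: "0 < t" and mem: "(1 / t) *\<^sub>R x \<in> convex hull (NK N K)"
  shows "N ux \<le> t"
proof -
  obtain y where y: "x \<bullet> y = N ux" "\<And>z. vcard z \<le> K \<Longrightarrow> z \<bullet> y \<le> N z"
    using sparse_norming_functional by blast
  have "NK N K \<subseteq> {p. y \<bullet> p \<le> 1}"
    using y(2) by (force simp: NK_def inner_commute)
  hence "convex hull (NK N K) \<subseteq> {p. y \<bullet> p \<le> 1}"
    by (intro hull_minimal) (auto simp: convex_halfspace_le)
  hence "(x \<bullet> y) / t \<le> 1" using mem by (auto simp: inner_commute)
  thus ?thesis using t y(1) by (simp add: divide_le_eq)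
qed

end

theorem mainTheorem6:
  fixes N :: "real^'n \<Rightarrow> real" and K :: nat and x :: "real^'n"
  assumes "1 < K" and "K < CARD('n)"
    and "is_norm N" and "sign_perm_invariant N"
  shows "gauge_c N K x = N (u_vec K x)"
proof -
  obtain p where p: "p permutes UNIV" "\<And>j. \<bar>x $ j\<bar> = absk x (Suc (idx (p j)))"
    using abs_eq_absk_permute[of x] by blast
  interpret ranked_vector_norm K x "\<lambda>j. Suc (idx (p j))" N
    using assms p bij_betw_Suc_idx_permute[OF p(1)] by unfold_locales auto
  have "ux = (\<chi> j. u_vec K x $ p j)" by (simp add: ux_def u_vec_def)
  hence "N ux = N (u_vec K x)"
    using sign_perm_invariant_permute[OF assms(4) permutes_bij[OF p(1)]] by simp
  moreover have "gauge_c N K x = N ux"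
    unfolding gauge_c_def
  proof (rule Inf_eq_if_between_rays)
    show "{N ux<..} \<subseteq> {t. 0 < t \<and> (1 / t) *\<^sub>R x \<in> convex hull NK N K}"
      using scaled_in_convex_hull_NK is_norm_nonneg[OF norm_N, of ux] by auto
    show "{t. 0 < t \<and> (1 / t) *\<^sub>R x \<in> convex hull NK N K} \<subseteq> {N ux..}"
      using norm_ux_le by auto
  qed
  ultimately show ?thesis by simp
qed

end
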